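(* Let $A\subset\mathbb{R}^d$ be a finite set of sites in general position. For all $r\in[0,\infty)$ and $k\in\mathbb{N}$: (1) the vertex sets of $\textnormal{S-Rhomb}_{r,k}$ and $\textnormal{S-Del}_{r,k}$ are equal (identifying the vertex $(\sum_{a\in v}a,-|v|)$ of the rhomboid tiling with the subset $v\subseteq A$); (2) the vertices of each sliced rhomboid in $\textnormal{S-Rhomb}_{r,k}$ span a simplex in $\textnormal{S-Del}_{r,k}$; (3) the vertices of each simplex in $\textnormal{S-Del}_{r,k}$ are contained in a sliced rhomboid of $\textnormal{S-Rhomb}_{r,k}$.
   Context: $\mathbb{N}=\{1,2,\dots\}$. Simplicial side: for $\tilde A\subseteq A$ let $\mathrm{Ball}_r(\tilde A)=\{b: \|b-\tilde a\|\le r\ \forall\tilde a\in\tilde A\}$ and for $|\tilde A|=k$ let $\mathrm{Vor}(\tilde A)=\{b\in\mathbb{R}^d: \|b-\tilde a\|\le\|b-a\|\ \forall\tilde a\in\tilde A, a\in A\setminus\tilde A\}$. Let $\mathrm{Del}^{+}_{r,k}$ be the abstract simplicial complex whose vertices are subsets $\tilde A\subseteq A$ with $|\tilde A|\in\{k,k+1\}$ and $\mathrm{Ball}_r(\tilde A)\cap\mathrm{Vor}(\tilde A)\neq\emptyset$, and whose simplices are the sets $\sigma$ of such subsets with $\bigcap_{\tilde A\in\sigma}(\mathrm{Ball}_r(\tilde A)\cap\mathrm{Vor}(\tilde A))\neq\emptyset$; $\textnormal{S-Del}_{r,k}=\bigcup_{i\ge k}\mathrm{Del}^{+}_{r,i}$.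 Rhomboid side: a $(d-1)$-sphere $S\subset\mathbb{R}^d$ partitions $A=A_{in}\sqcup A_{on}\sqcup A_{out}$ (sites inside, on, outside $S$). The combinatorial rhomboid of $S$ is $\rho_S=\{A_{in}\cup Q: Q\subseteq A_{on}\}$; its elements are (combinatorial) vertices. A vertex $v=\{a_1,\dots,a_m\}$ is embedded as the point $(\sum_i a_i,-m)\in\mathbb{R}^{d+1}$ ($m$ is its depth), and the geometric rhomboid of $S$ is the convex hull of its embedded vertices. The rhomboid tiling $\mathrm{Rhomb}$ is the polyhedral complex of all rhomboids $\rho_S$, $S$ ranging over spheres. For a rhomboid $\rho$, $r_\rho$ is the infimum of radii of spheres $S$ with $\rho_S=\rho$. The sliced rhomboid tiling $\textnormal{S-Rhomb}$ is the polyhedral complex obtained by cutting every rhomboid along the hyperplanes $\{x_{d+1}=-j\}$, $j=0,\dots,|A|$; its cells (sliced rhomboids) are the intersections of rhomboids with these hyperplanes and with the slabs $\{j\le -x_{d+1}\le j+1\}$. For a sliced rhomboid $\rho$, $k_\rho$ is the minimum depth of its vertices and $r_\rho:=r_{\rho'}$ where $\rho'$ is the smallest-dimensional rhomboid containing $\rho$. $\textnormal{S-Rhomb}_{r,k}=\{\rho\in\textnormal{S-Rhomb}: r_\rho\le r, k_\rho\ge k\}$. *)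

theory Defs
  imports "HOL-Analysis.Analysis"
begin

text \<open>Sites live in an abstract Euclidean space 'a, d = DIM('a).\<close>

definition gen_pos :: "'a::euclidean_space set \<Rightarrow> bool" where
  "gen_pos A \<longleftrightarrow> finite A
     \<and> (\<forall>B\<subseteq>A. card B \<le> DIM('a) + 1 \<longrightarrow> \<not> affine_dependent B)
     \<and> (\<forall>B\<subseteq>A. card B = DIM('a) + 2 \<longrightarrow> \<not> (\<exists>c \<rho>. \<rho> > 0 \<and> B \<subseteq> sphere c \<rho>))"

definition BallR :: "real \<Rightarrow> 'a::euclidean_space set \<Rightarrow> 'a set" where
  "BallR r B = {b. \<forall>a\<in>B. dist b a \<le> r}"

definition Vor :: "'a::euclidean_space set \<Rightarrow> 'a set \<Rightarrow> 'a set" where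
  "Vor A B = {b. \<forall>a\<in>B. \<forall>a'\<in>A - B. dist b a \<le> dist b a'}"

definition BV :: "'a::euclidean_space set \<Rightarrow> real \<Rightarrow> 'a set \<Rightarrow> 'a set" where
  "BV A r B = BallR r B \<inter> Vor A B"

definition Del_plus_vertices :: "'a::euclidean_space set \<Rightarrow> real \<Rightarrow> nat \<Rightarrow> 'a set set" where
  "Del_plus_vertices A r k = {B. B \<subseteq> A \<and> card B \<in> {k, k + 1} \<and> BV A r B \<noteq> {}}"

definition Del_plus :: "'a::euclidean_space set \<Rightarrow> real \<Rightarrow> nat \<Rightarrow> 'a set set set" where
  "Del_plus A r k = {\<sigma>. \<sigma> \<noteq> {} \<and> \<sigma> \<subseteq> Del_plus_vertices A r k \<and> (\<Inter>B\<in>\<sigma>. BV A r B) \<noteq> {}}"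

definition SDel :: "'a::euclidean_space set \<Rightarrow> real \<Rightarrow> nat \<Rightarrow> 'a set set set" where
  "SDel A r k = (\<Union>i\<in>{k..}. Del_plus A r i)"

definition SDel_vertices :: "'a::euclidean_space set \<Rightarrow> real \<Rightarrow> nat \<Rightarrow> 'a set set" where
  "SDel_vertices A r k = (\<Union>i\<in>{k..}. Del_plus_vertices A r i)"

definition A_in :: "'a::euclidean_space set \<Rightarrow> 'a \<Rightarrow> real \<Rightarrow> 'a set" where
  "A_in A c \<rho> = {a\<in>A. dist a c < \<rho>}"

definition A_on :: "'a::euclidean_space set \<Rightarrow> 'a \<Rightarrow> real \<Rightarrow> 'a set" where
  "A_on A c \<rho> = {a\<in>A. dist a c = \<rho>}"

definition rhomb :: "'a::euclidean_space set \<Rightarrow> 'a \<Rightarrow> real \<Rightarrow> 'a set set" where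
  "rhomb A c \<rho> = {A_in A c \<rho> \<union> Q | Q. Q \<subseteq> A_on A c \<rho>}"

definition Rhombs :: "'a::euclidean_space set \<Rightarrow> 'a set set set" where
  "Rhombs A = {rhomb A c \<rho> | c \<rho>. \<rho> > 0}"

definition r_rhomb :: "'a::euclidean_space set \<Rightarrow> 'a set set \<Rightarrow> real" where
  "r_rhomb A R = Inf {\<rho>. \<rho> > 0 \<and> (\<exists>c. rhomb A c \<rho> = R)}"

definition emb :: "'a::euclidean_space set \<Rightarrow> 'a \<times> real" where
  "emb v = ((\<Sum>a\<in>v. a), - real (card v))"

definition ghull :: "'a::euclidean_space set set \<Rightarrow> ('a \<times> real) set" where
  "ghull R = convex hull (emb ` R)"

definition SRcells :: "'a::euclidean_space set \<Rightarrow> ('a \<times> real) set set" where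
  "SRcells A = {P. P \<noteq> {} \<and> (\<exists>R\<in>Rhombs A. \<exists>j::nat.
       P = ghull R \<inter> {x. snd x = - real j}
     \<or> P = ghull R \<inter> {x. real j \<le> - snd x \<and> - snd x \<le> real j + 1})}"

definition cellverts :: "'a::euclidean_space set \<Rightarrow> ('a \<times> real) set \<Rightarrow> 'a set set" where
  "cellverts A P = {v \<in> \<Union>(Rhombs A). emb v extreme_point_of P}"

definition k_cell :: "'a::euclidean_space set \<Rightarrow> ('a \<times> real) set \<Rightarrow> nat" where
  "k_cell A P = Min (card ` cellverts A P)"

definition min_rhomb :: "'a::euclidean_space set \<Rightarrow> ('a \<times> real) set \<Rightarrow> 'a set set" where
  "min_rhomb A P = (ARG_MIN (\<lambda>R. aff_dim (ghull R)) R. R \<in> Rhombs A \<and> P \<subseteq> ghull R)"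

definition r_cell :: "'a::euclidean_space set \<Rightarrow> ('a \<times> real) set \<Rightarrow> real" where
  "r_cell A P = r_rhomb A (min_rhomb A P)"

definition SRhomb :: "'a::euclidean_space set \<Rightarrow> real \<Rightarrow> nat \<Rightarrow> ('a \<times> real) set set" where
  "SRhomb A r k = {P \<in> SRcells A. r_cell A P \<le> r \<and> k \<le> k_cell A P}"

definition SRhomb_vertices :: "'a::euclidean_space set \<Rightarrow> real \<Rightarrow> nat \<Rightarrow> 'a set set" where
  "SRhomb_vertices A r k = (\<Union>P\<in>SRhomb A r k. cellverts A P)"

end

theory Submission
  imports Defs
begin

text \<open>A set \<open>w \<subseteq> A\<close> belongs to the rhomboid of a sphere exactly when it minimises the total
  power \<open>\<Sum>x\<in>w. dist x c\<^sup>2 - \<rho>\<^sup>2\<close>, and the total powers of two spheres differ by a linear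
  functional of the embedded vertex \<open>(\<Sum>w, - card w)\<close>. Hence rhomboids meet in rhomboids
  (realised by a sphere of the pencil through both), their realisations meet in the realisation
  of the intersection, and, by general position, every vertex of a rhomboid is an extreme point
  of every cell containing it. The vertices of a sliced cell are thus members of its minimal
  rhomboid at two consecutive depths, and centres of nearly optimal spheres for that rhomboid
  converge to a point in all their balls and Voronoi regions. Conversely, a common point \<open>b\<close>
  of the balls and Voronoi regions of a Delaunay simplex is the centre of a sphere through the
  farthest site whose rhomboid contains the simplex; slicing it at the depth of the simplex
  gives the required cell.\<close>

section \<open>Rhomboids as minimisers of the total power\<close>

definition sphere_power :: "'a::euclidean_space \<Rightarrow> real \<Rightarrow> 'a \<Rightarrow> real" where
  "sphere_power c \<rho> x = (dist x c)\<^sup>2 - \<rho>\<^sup>2"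

definition set_power :: "'a::euclidean_space \<Rightarrow> real \<Rightarrow> 'a set \<Rightarrow> real" where
  "set_power c \<rho> w = (\<Sum>x\<in>w. sphere_power c \<rho> x)"

definition min_power :: "'a::euclidean_space set \<Rightarrow> 'a \<Rightarrow> real \<Rightarrow> real" where
  "min_power A c \<rho> = set_power c \<rho> (A_in A c \<rho>)"

lemma mem_rhomb_iff:
  "w \<in> rhomb A c \<rho> \<longleftrightarrow> A_in A c \<rho> \<subseteq> w \<and> w \<subseteq> A_in A c \<rho> \<union> A_on A c \<rho>"
proof
  assume "A_in A c \<rho> \<subseteq> w \<and> w \<subseteq> A_in A c \<rho> \<union> A_on A c \<rho>"
  then have "w = A_in A c \<rho> \<union> (w \<inter> A_on A c \<rho>)" by auto
  then show "w \<in> rhomb A c \<rho>" unfolding rhomb_def by blast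
next
  assume "w \<in> rhomb A c \<rho>"
  then show "A_in A c \<rho> \<subseteq> w \<and> w \<subseteq> A_in A c \<rho> \<union> A_on A c \<rho>"
    unfolding rhomb_def by blast
qed

lemma A_in_mem_rhomb: "A_in A c \<rho> \<in> rhomb A c \<rho>"
  by (simp add: mem_rhomb_iff)

lemma subset_of_mem_rhomb: "w \<in> rhomb A c \<rho> \<Longrightarrow> w \<subseteq> A"
  unfolding mem_rhomb_iff A_in_def A_on_def by blast

lemma finite_of_mem_rhomb: "finite A \<Longrightarrow> w \<in> rhomb A c \<rho> \<Longrightarrow> finite w"
  by (metis finite_subset subset_of_mem_rhomb)

lemma finite_rhomb: "finite A \<Longrightarrow> finite (rhomb A c \<rho>)"
  by (metis Pow_iff finite_Pow_iff finite_subset subsetI subset_of_mem_rhomb)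

lemma Rhombs_E:
  assumes "R \<in> Rhombs A"
  obtains c \<rho> where "0 < \<rho>" "R = rhomb A c \<rho>"
  using assms unfolding Rhombs_def by blast

lemma sum_diff_eq_sum_Diff:
  fixes h :: "'a \<Rightarrow> 'b::ab_group_add"
  assumes "finite w" "finite v"
  shows "sum h w - sum h v = sum h (w - v) - sum h (v - w)"
  using sum.Int_Diff[OF assms(1), of h v] sum.Int_Diff[OF assms(2), of h w]
  by (simp add: Int_commute)

lemma sphere_power_nonneg_iff: "0 \<le> \<rho> \<Longrightarrow> 0 \<le> sphere_power c \<rho> x \<longleftrightarrow> \<rho> \<le> dist x c"
  by (simp add: sphere_power_def)

lemma sphere_power_eq_0_iff: "0 \<le> \<rho> \<Longrightarrow> sphere_power c \<rho> x = 0 \<longleftrightarrow> dist x c = \<rho>"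
  by (simp add: sphere_power_def)

lemma set_power_minus_min_power:
  assumes "finite A" "w \<subseteq> A" "0 \<le> \<rho>"
  shows "0 \<le> set_power c \<rho> w - min_power A c \<rho>"
    and "set_power c \<rho> w = min_power A c \<rho> \<longleftrightarrow> w \<in> rhomb A c \<rho>"
proof -
  let ?I = "A_in A c \<rho>" and ?p = "sphere_power c \<rho>"
  have fin: "finite w" "finite ?I"
    using assms(1,2) finite_subset by (auto simp: A_in_def)
  have inside: "0 < - ?p x" if "x \<in> ?I - w" for x
  proof -
    have "dist x c < \<rho>"
      using that by (simp add: A_in_def)
    then show ?thesis
      using sphere_power_nonneg_iff[OF assms(3), of c x] by linarith
  qed
  have outside: "0 \<le> ?p x" "?p x = 0 \<longleftrightarrow> x \<in> A_on A c \<rho>" if "x \<in> w - ?I" for x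
    using that assms(2)
    by (auto simp: A_in_def A_on_def not_less sphere_power_nonneg_iff[OF assms(3)]
        sphere_power_eq_0_iff[OF assms(3)])
  have diff: "set_power c \<rho> w - min_power A c \<rho> = sum ?p (w - ?I) + sum (\<lambda>x. - ?p x) (?I - w)"
    unfolding set_power_def min_power_def sum_diff_eq_sum_Diff[OF fin] by (simp add: sum_negf)
  have sum1: "0 \<le> sum ?p (w - ?I)" "sum ?p (w - ?I) = 0 \<longleftrightarrow> w - ?I \<subseteq> A_on A c \<rho>"
    using sum_nonneg_eq_0_iff[of "w - ?I" ?p] fin outside by (auto intro: sum_nonneg)
  have sum2: "0 \<le> sum (\<lambda>x. - ?p x) (?I - w)" "sum (\<lambda>x. - ?p x) (?I - w) = 0 \<longleftrightarrow> ?I \<subseteq> w"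
  proof -
    show "0 \<le> sum (\<lambda>x. - ?p x) (?I - w)"
      by (intro sum_nonneg less_imp_le inside)
    have "0 < sum (\<lambda>x. - ?p x) (?I - w)" if "\<not> ?I \<subseteq> w"
      using that fin inside by (intro sum_pos) auto
    then show "sum (\<lambda>x. - ?p x) (?I - w) = 0 \<longleftrightarrow> ?I \<subseteq> w"
      by (metis Diff_eq_empty_iff less_irrefl sum.empty)
  qed
  show "0 \<le> set_power c \<rho> w - min_power A c \<rho>"
    using diff sum1(1) sum2(1) by linarith
  have "set_power c \<rho> w = min_power A c \<rho> \<longleftrightarrow> set_power c \<rho> w - min_power A c \<rho> = 0"
    by simp
  also have "\<dots> \<longleftrightarrow> sum ?p (w - ?I) = 0 \<and> sum (\<lambda>x. - ?p x) (?I - w) = 0"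
    unfolding diff by (rule add_nonneg_eq_0_iff[OF sum1(1) sum2(1)])
  also have "\<dots> \<longleftrightarrow> w \<in> rhomb A c \<rho>"
    unfolding sum1(2) sum2(2) mem_rhomb_iff by blast
  finally show "set_power c \<rho> w = min_power A c \<rho> \<longleftrightarrow> w \<in> rhomb A c \<rho>" .
qed

corollary set_power_rhomb:
  assumes "finite A" "0 \<le> \<rho>" "w \<in> rhomb A c \<rho>"
  shows "set_power c \<rho> w = min_power A c \<rho>"
  using set_power_minus_min_power(2)[OF assms(1) subset_of_mem_rhomb assms(2)] assms(3) by blast

corollary min_power_le:
  assumes "finite A" "w \<subseteq> A" "0 \<le> \<rho>"
  shows "min_power A c \<rho> \<le> set_power c \<rho> w"
  using set_power_minus_min_power(1)[OF assms] by simp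

corollary min_power_less:
  assumes "finite A" "w \<subseteq> A" "0 \<le> \<rho>" "w \<notin> rhomb A c \<rho>"
  shows "min_power A c \<rho> < set_power c \<rho> w"
proof -
  have "set_power c \<rho> w \<noteq> min_power A c \<rho>"
    using set_power_minus_min_power(2)[OF assms(1-3)] assms(4) by blast
  then show ?thesis
    using set_power_minus_min_power(1)[OF assms(1-3), of c] by linarith
qed

lemma mem_rhomb_iff_min_power:
  assumes "finite A" "0 \<le> \<rho>"
  shows "w \<in> rhomb A c \<rho> \<longleftrightarrow> w \<subseteq> A \<and> set_power c \<rho> w = min_power A c \<rho>"
  using set_power_minus_min_power(2)[OF assms(1) _ assms(2)] subset_of_mem_rhomb by blast

text \<open>\<open>radical_vec c \<rho> c' \<rho>'\<close> is the normal of the radical hyperplane of the two spheres,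
  lifted to the space of embedded vertices.\<close>

definition radical_vec :: "'a::euclidean_space \<Rightarrow> real \<Rightarrow> 'a \<Rightarrow> real \<Rightarrow> 'a \<times> real" where
  "radical_vec c \<rho> c' \<rho>' = (2 *\<^sub>R (c' - c), \<rho>\<^sup>2 - \<rho>'\<^sup>2 - (norm c)\<^sup>2 + (norm c')\<^sup>2)"

lemma radical_vec_swap: "radical_vec c' \<rho>' c \<rho> = - radical_vec c \<rho> c' \<rho>'"
  by (simp add: radical_vec_def algebra_simps)

lemma set_power_diff:
  assumes "finite w"
  shows "set_power c \<rho> w - set_power c' \<rho>' w = radical_vec c \<rho> c' \<rho>' \<bullet> emb w"
proof -
  let ?K = "\<rho>\<^sup>2 - \<rho>'\<^sup>2 - (norm c)\<^sup>2 + (norm c')\<^sup>2"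
  have "sphere_power c \<rho> x - sphere_power c' \<rho>' x = 2 *\<^sub>R (c' - c) \<bullet> x - ?K" for x
    unfolding sphere_power_def dist_norm power2_norm_eq_inner
    by (simp add: algebra_simps inner_diff_left inner_diff_right inner_commute)
  then have "set_power c \<rho> w - set_power c' \<rho>' w = (\<Sum>x\<in>w. 2 *\<^sub>R (c' - c) \<bullet> x - ?K)"
    by (simp add: set_power_def flip: sum_subtractf)
  also have "\<dots> = radical_vec c \<rho> c' \<rho>' \<bullet> emb w"
    by (simp add: radical_vec_def emb_def inner_sum_right sum_subtractf mult.commute)
  finally show ?thesis .
qed

section \<open>Geometric rhomboids\<close>

lemma convex_hull_Int_supporting_hyperplane:
  fixes S :: "'a::euclidean_space set"
  assumes "compact S" "\<And>y. y \<in> S \<Longrightarrow> C \<le> u \<bullet> y"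
  shows "convex hull S \<inter> {p. u \<bullet> p = C} = convex hull (S \<inter> {p. u \<bullet> p = C})"
proof
  have "convex hull S \<subseteq> {p. C \<le> u \<bullet> p}"
    using assms(2) by (intro hull_minimal convex_halfspace_ge) auto
  then have "(convex hull S \<inter> {p. u \<bullet> p = C}) face_of convex hull S"
    by (intro face_of_Int_supporting_hyperplane_ge) auto
  then obtain S' where S': "S' \<subseteq> S" "convex hull S \<inter> {p. u \<bullet> p = C} = convex hull S'"
    using face_of_convex_hull_subset[OF assms(1)] by metis
  then have "S' \<subseteq> S \<inter> {p. u \<bullet> p = C}"
    using hull_subset[of S' convex] by auto
  then show "convex hull S \<inter> {p. u \<bullet> p = C} \<subseteq> convex hull (S \<inter> {p. u \<bullet> p = C})"
    using S'(2) hull_mono by metis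
next
  show "convex hull (S \<inter> {p. u \<bullet> p = C}) \<subseteq> convex hull S \<inter> {p. u \<bullet> p = C}"
    by (simp add: hull_mono convex_hyperplane hull_minimal)
qed

lemma ghull_rhomb_subset_halfspace:
  assumes "finite A" "0 \<le> \<rho>" "0 \<le> \<rho>'"
  shows "ghull (rhomb A c' \<rho>')
    \<subseteq> {p. min_power A c \<rho> - min_power A c' \<rho>' \<le> radical_vec c \<rho> c' \<rho>' \<bullet> p}"
  unfolding ghull_def
proof (intro hull_minimal convex_halfspace_ge subsetI, elim imageE, simp)
  fix w assume w: "w \<in> rhomb A c' \<rho>'"
  then have "radical_vec c \<rho> c' \<rho>' \<bullet> emb w = set_power c \<rho> w - min_power A c' \<rho>'"
    using assms set_power_diff[OF finite_of_mem_rhomb] set_power_rhomb by metis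
  moreover have "min_power A c \<rho> \<le> set_power c \<rho> w"
    using assms min_power_le subset_of_mem_rhomb[OF w] by blast
  ultimately show "min_power A c \<rho> - min_power A c' \<rho>' \<le> radical_vec c \<rho> c' \<rho>' \<bullet> emb w"
    by simp
qed

lemma mem_rhomb_if_emb_mem_ghull:
  assumes "finite A" "0 \<le> \<rho>" "0 \<le> \<rho>'"
    and v: "v \<in> rhomb A c \<rho>" and emb_v: "emb v \<in> ghull (rhomb A c' \<rho>')"
  shows "v \<in> rhomb A c' \<rho>'"
proof -
  have vA: "v \<subseteq> A" using subset_of_mem_rhomb[OF v] .
  have "min_power A c \<rho> - min_power A c' \<rho>' \<le> radical_vec c \<rho> c' \<rho>' \<bullet> emb v"
    using ghull_rhomb_subset_halfspace[OF assms(1-3)] emb_v by blast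
  also have "\<dots> = min_power A c \<rho> - set_power c' \<rho>' v"
    using set_power_diff[OF finite_subset[OF vA assms(1)], of c \<rho> c' \<rho>']
      set_power_rhomb[OF assms(1,2) v] by linarith
  finally have "set_power c' \<rho>' v = min_power A c' \<rho>'"
    using min_power_le[OF assms(1) vA assms(3), of c'] by linarith
  then show ?thesis
    using set_power_minus_min_power(2)[OF assms(1) vA assms(3)] by blast
qed

lemma ghull_Int_rhomb:
  assumes "finite A" "0 \<le> \<rho>" "0 \<le> \<rho>'"
  shows "ghull (rhomb A c \<rho>) \<inter> ghull (rhomb A c' \<rho>') = ghull (rhomb A c \<rho> \<inter> rhomb A c' \<rho>')"
proof
  let ?R = "rhomb A c \<rho>" and ?R' = "rhomb A c' \<rho>'"
  let ?u = "radical_vec c' \<rho>' c \<rho>" and ?C = "min_power A c' \<rho>' - min_power A c \<rho>"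
  let ?H = "{p. ?u \<bullet> p = ?C}"
  have on_R: "?C \<le> ?u \<bullet> emb w" "?u \<bullet> emb w = ?C \<longleftrightarrow> w \<in> ?R'" if w: "w \<in> ?R" for w
  proof -
    have "?u \<bullet> emb w = set_power c' \<rho>' w - min_power A c \<rho>"
      using set_power_diff[OF finite_of_mem_rhomb[OF assms(1) w], of c' \<rho>' c \<rho>]
        set_power_rhomb[OF assms(1,2) w] by linarith
    moreover note set_power_minus_min_power[OF assms(1) subset_of_mem_rhomb[OF w] assms(3), of c']
    ultimately show "?C \<le> ?u \<bullet> emb w" "?u \<bullet> emb w = ?C \<longleftrightarrow> w \<in> ?R'"
      by simp_all
  qed
  have "emb ` ?R \<inter> ?H = emb ` (?R \<inter> ?R')"
  proof (intro equalityI subsetI)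
    fix y assume "y \<in> emb ` ?R \<inter> ?H"
    then obtain w where "w \<in> ?R" "y = emb w" "?u \<bullet> emb w = ?C" by blast
    then show "y \<in> emb ` (?R \<inter> ?R')" using on_R(2) by blast
  next
    fix y assume "y \<in> emb ` (?R \<inter> ?R')"
    then obtain w where "w \<in> ?R" "w \<in> ?R'" "y = emb w" by blast
    then show "y \<in> emb ` ?R \<inter> ?H" using on_R(2) by blast
  qed
  moreover have "compact (emb ` ?R)"
    using finite_rhomb[OF assms(1)] by (intro finite_imp_compact finite_imageI)
  ultimately have face: "ghull ?R \<inter> ?H = ghull (?R \<inter> ?R')"
    unfolding ghull_def using on_R(1) convex_hull_Int_supporting_hyperplane[of "emb ` ?R" ?C ?u]
    by (metis (no_types, lifting) imageE)
  have "ghull ?R \<subseteq> {p. ?C \<le> ?u \<bullet> p}"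
    using ghull_rhomb_subset_halfspace[OF assms(1,3,2), where c = c' and c' = c] by simp
  moreover have "ghull ?R' \<subseteq> {p. ?u \<bullet> p \<le> ?C}"
    using ghull_rhomb_subset_halfspace[OF assms, where c = c and c' = c']
    by (auto simp: radical_vec_swap[where c = c and c' = c'])
  ultimately have "ghull ?R \<inter> ghull ?R' \<subseteq> ghull ?R \<inter> ?H"
    by fastforce
  then show "ghull ?R \<inter> ghull ?R' \<subseteq> ghull (?R \<inter> ?R')"
    using face by simp
next
  show "ghull (rhomb A c \<rho> \<inter> rhomb A c' \<rho>') \<subseteq> ghull (rhomb A c \<rho>) \<inter> ghull (rhomb A c' \<rho>')"
    unfolding ghull_def by (intro Int_greatest hull_mono image_mono) auto
qed

lemma aff_dim_ghull_Int_rhomb_less: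
  assumes "finite A" "0 \<le> \<rho>" "0 \<le> \<rho>'" "\<not> rhomb A c' \<rho>' \<subseteq> rhomb A c \<rho>"
  shows "aff_dim (ghull (rhomb A c \<rho> \<inter> rhomb A c' \<rho>')) < aff_dim (ghull (rhomb A c' \<rho>'))"
proof -
  let ?R = "rhomb A c \<rho>" and ?R' = "rhomb A c' \<rho>'"
  let ?u = "radical_vec c \<rho> c' \<rho>'" and ?C = "min_power A c \<rho> - min_power A c' \<rho>'"
  have on_R': "?u \<bullet> emb w = set_power c \<rho> w - min_power A c' \<rho>'" if "w \<in> ?R'" for w
    using set_power_diff[OF finite_of_mem_rhomb[OF assms(1) that], of c \<rho> c' \<rho>']
      set_power_rhomb[OF assms(1,3) that] by linarith
  obtain w where w: "w \<in> ?R'" "w \<notin> ?R"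
    using assms(4) by blast
  have "?C < ?u \<bullet> emb w"
    using on_R'[OF w(1)] min_power_less[OF assms(1) subset_of_mem_rhomb[OF w(1)] assms(2) w(2)]
    by simp
  moreover have "affine hull (emb ` (?R \<inter> ?R')) \<subseteq> {p. ?u \<bullet> p = ?C}"
  proof (rule hull_minimal)
    show "emb ` (?R \<inter> ?R') \<subseteq> {p. ?u \<bullet> p = ?C}"
      using on_R' set_power_rhomb[OF assms(1,2)] by force
  qed (rule affine_hyperplane)
  ultimately have "emb w \<notin> affine hull (emb ` (?R \<inter> ?R'))"
    by fastforce
  moreover have "emb w \<in> affine hull (emb ` ?R')"
    using w(1) by (simp add: hull_inc)
  moreover have "affine hull (emb ` (?R \<inter> ?R')) \<subseteq> affine hull (emb ` ?R')"
    by (intro hull_mono image_mono) blast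
  ultimately have "affine hull (emb ` (?R \<inter> ?R')) \<subset> affine hull (emb ` ?R')"
    by blast
  then show ?thesis
    unfolding ghull_def aff_dim_convex_hull by (rule aff_dim_psubset)
qed

lemma affine_independent_interpolation:
  fixes S :: "'a::euclidean_space set"
  assumes "\<not> affine_dependent S"
  obtains u \<beta> where "\<And>z. z \<in> S \<Longrightarrow> u \<bullet> z + \<beta> = f z"
proof (cases "S = {}")
  case False
  then obtain z0 where z0: "z0 \<in> S" by blast
  let ?T = "(\<lambda>x. - z0 + x) ` (S - {z0})"
  have "\<not> dependent ?T"
    using assms affine_dependent_iff_dependent2[OF z0] by simp
  then obtain g where g: "linear g" "\<And>y. y \<in> ?T \<Longrightarrow> g y = f (y + z0) - f z0"
    using linear_independent_extend[of ?T "\<lambda>y. f (y + z0) - f z0"] by metis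
  define u where "u = adjoint g 1"
  have gu: "g x = u \<bullet> x" for x
    using adjoint_works[OF g(1), of x 1] by (simp add: u_def inner_commute)
  have "u \<bullet> z + (f z0 - u \<bullet> z0) = f z" if "z \<in> S" for z
  proof (cases "z = z0")
    case False
    then have "g (- z0 + z) = f z - f z0"
      using g(2)[of "- z0 + z"] that by simp
    then show ?thesis
      by (simp add: gu inner_diff_right)
  qed simp
  then show ?thesis
    using that by blast
qed blast

lemma A_on_affine_independent:
  assumes gp: "gen_pos A" and "0 < \<rho>"
  shows "\<not> affine_dependent (A_on A c \<rho>)"
proof -
  have OA: "A_on A c \<rho> \<subseteq> A"
    by (auto simp: A_on_def)
  have "card (A_on A c \<rho>) \<le> DIM('a) + 1"
  proof (rule ccontr)
    assume "\<not> card (A_on A c \<rho>) \<le> DIM('a) + 1"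
    then have "DIM('a) + 2 \<le> card (A_on A c \<rho>)"
      by simp
    then obtain B where B: "B \<subseteq> A_on A c \<rho>" "card B = DIM('a) + 2"
      by (rule obtain_subset_with_card_n)
    then have "B \<subseteq> A" "B \<subseteq> sphere c \<rho>"
      using OA by (auto simp: A_on_def dist_commute)
    then show False
      using gp B(2) \<open>0 < \<rho>\<close> unfolding gen_pos_def by blast
  qed
  then show ?thesis
    using gp OA unfolding gen_pos_def by blast
qed

lemma extreme_point_of_exposed_in_convex_hull:
  fixes S :: "'a::euclidean_space set"
  assumes "finite S" "x \<in> S" "\<And>y. y \<in> S \<Longrightarrow> y \<noteq> x \<Longrightarrow> U \<bullet> x < U \<bullet> y"
    and "P \<subseteq> convex hull S" "x \<in> P"
  shows "x extreme_point_of P"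
proof -
  let ?H = "{p. U \<bullet> p = U \<bullet> x}"
  have ge: "U \<bullet> x \<le> U \<bullet> y" if "y \<in> S" for y
    using assms(3)[OF that] by (cases "y = x") auto
  have "S \<inter> ?H = {x}"
    using assms(2,3) by force
  then have "convex hull S \<inter> ?H = {x}"
    using convex_hull_Int_supporting_hyperplane[OF finite_imp_compact[OF assms(1)], of "U \<bullet> x" U] ge
    by simp
  then have "P \<inter> ?H = {x}"
    using assms(4,5) by blast
  moreover have "convex hull S \<subseteq> {p. U \<bullet> x \<le> U \<bullet> p}"
    using ge by (intro hull_minimal convex_halfspace_ge) auto
  ultimately show ?thesis
    using assms(4) by (intro extreme_point_of_Int_supporting_hyperplane_ge) auto
qed

text \<open>General position makes the cospherical sites affinely independent, so a linear functional
  can take the value \<open>-1\<close> on the sites of \<open>v\<close> and \<open>1\<close> on the other sites of the sphere; it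
  exposes \<open>emb v\<close> as the unique minimiser over the rhomboid.\<close>

lemma emb_extreme_point_of:
  assumes gp: "gen_pos A" and "0 < \<rho>" and v: "v \<in> rhomb A c \<rho>"
    and P: "P \<subseteq> ghull (rhomb A c \<rho>)" "emb v \<in> P"
  shows "emb v extreme_point_of P"
proof -
  let ?R = "rhomb A c \<rho>" and ?O = "A_on A c \<rho>"
  have A: "finite A"
    using gp by (simp add: gen_pos_def)
  obtain u \<beta> where u: "\<And>z. z \<in> ?O \<Longrightarrow> u \<bullet> z + \<beta> = (if z \<in> v then -1 else 1)"
    using affine_independent_interpolation[OF A_on_affine_independent[OF gp \<open>0 < \<rho>\<close>, of c],
        where f = "\<lambda>z. if z \<in> v then -1 else 1"] by blast
  define U where "U = (u, - \<beta>)"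
  have U_emb: "U \<bullet> emb w = (\<Sum>x\<in>w. u \<bullet> x + \<beta>)" for w
    by (simp add: U_def emb_def inner_sum_right sum.distrib)
  have "U \<bullet> emb v < U \<bullet> emb w" if w: "w \<in> ?R" "w \<noteq> v" for w
  proof -
    have fin: "finite w" "finite v"
      using A w(1) v finite_of_mem_rhomb by blast+
    have sub: "w - v \<subseteq> ?O" "v - w \<subseteq> ?O"
      using w(1) v by (auto simp: mem_rhomb_iff)
    have "(\<Sum>x\<in>w - v. u \<bullet> x + \<beta>) = real (card (w - v))"
      using sub(1) u by (simp add: subset_iff)
    moreover have "(\<Sum>x\<in>v - w. u \<bullet> x + \<beta>) = - real (card (v - w))"
      using sub(2) u by (simp add: subset_iff sum_negf)
    moreover have "w - v \<noteq> {} \<or> v - w \<noteq> {}"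
      using w(2) by blast
    then have "0 < card (w - v) + card (v - w)"
      using fin by (auto simp: card_gt_0_iff)
    ultimately have "0 < (\<Sum>x\<in>w. u \<bullet> x + \<beta>) - (\<Sum>x\<in>v. u \<bullet> x + \<beta>)"
      using fin by (simp add: sum_diff_eq_sum_Diff) linarith
    then show ?thesis
      by (simp add: U_emb)
  qed
  then show ?thesis
    using P v finite_rhomb[OF A] unfolding ghull_def
    by (intro extreme_point_of_exposed_in_convex_hull[of "emb ` ?R" _ U]) force+
qed

section \<open>Pencils of spheres\<close>

definition pencil_center :: "'a::real_vector \<Rightarrow> 'a \<Rightarrow> real \<Rightarrow> 'a" where
  "pencil_center c c' t = (1 - t) *\<^sub>R c + t *\<^sub>R c'"

definition pencil_sq_radius :: "'a::euclidean_space \<Rightarrow> real \<Rightarrow> 'a \<Rightarrow> real \<Rightarrow> real \<Rightarrow> real" where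
  "pencil_sq_radius c \<rho> c' \<rho>' t = (1 - t) * \<rho>\<^sup>2 + t * \<rho>'\<^sup>2 - t * (1 - t) * (dist c c')\<^sup>2"

lemma set_power_pencil:
  assumes "0 \<le> pencil_sq_radius c \<rho> c' \<rho>' t"
  shows "set_power (pencil_center c c' t) (sqrt (pencil_sq_radius c \<rho> c' \<rho>' t)) w
    = (1 - t) * set_power c \<rho> w + t * set_power c' \<rho>' w"
proof -
  have "sphere_power (pencil_center c c' t) (sqrt (pencil_sq_radius c \<rho> c' \<rho>' t)) x
      = (1 - t) * sphere_power c \<rho> x + t * sphere_power c' \<rho>' x" for x
    using assms unfolding sphere_power_def pencil_center_def pencil_sq_radius_def
      dist_norm power2_norm_eq_inner
    by (simp add: algebra_simps inner_diff_left inner_diff_right inner_add_left inner_add_right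
        inner_commute power2_eq_square)
  then show ?thesis
    by (simp add: set_power_def sum.distrib sum_distrib_left)
qed

lemma rhomb_pencil:
  assumes "finite A" "0 \<le> \<rho>" "0 \<le> \<rho>'" "rhomb A c \<rho> \<inter> rhomb A c' \<rho>' \<noteq> {}"
    and t: "0 < t" "t < 1" and Q: "0 \<le> pencil_sq_radius c \<rho> c' \<rho>' t"
  shows "rhomb A (pencil_center c c' t) (sqrt (pencil_sq_radius c \<rho> c' \<rho>' t))
    = rhomb A c \<rho> \<inter> rhomb A c' \<rho>'"
proof -
  let ?c = "pencil_center c c' t" and ?s = "sqrt (pencil_sq_radius c \<rho> c' \<rho>' t)"
  let ?m = "(1 - t) * min_power A c \<rho> + t * min_power A c' \<rho>'"
  define E where "E w = (1 - t) * (set_power c \<rho> w - min_power A c \<rho>)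
    + t * (set_power c' \<rho>' w - min_power A c' \<rho>')" for w
  have power_E: "set_power ?c ?s w = ?m + E w" for w
    unfolding set_power_pencil[OF Q] E_def by (simp add: algebra_simps)
  have E: "0 \<le> E w \<and> (E w = 0 \<longleftrightarrow> w \<in> rhomb A c \<rho> \<inter> rhomb A c' \<rho>')" if "w \<subseteq> A" for w
  proof -
    note d = set_power_minus_min_power[OF assms(1) that assms(2), of c]
      and d' = set_power_minus_min_power[OF assms(1) that assms(3), of c']
    have "0 \<le> (1 - t) * (set_power c \<rho> w - min_power A c \<rho>)"
      "0 \<le> t * (set_power c' \<rho>' w - min_power A c' \<rho>')"
      using d(1) d'(1) t by simp_all
    then show ?thesis
      using d(2) d'(2) t unfolding E_def by (auto simp: add_nonneg_eq_0_iff)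
  qed
  obtain w0 where w0: "w0 \<in> rhomb A c \<rho> \<inter> rhomb A c' \<rho>'"
    using assms(4) by blast
  have w0A: "w0 \<subseteq> A"
    using w0 subset_of_mem_rhomb by blast
  have "min_power A ?c ?s = ?m"
  proof (rule antisym)
    show "min_power A ?c ?s \<le> ?m"
      using min_power_le[OF assms(1) w0A real_sqrt_ge_zero[OF Q], of ?c] power_E[of w0] E[OF w0A] w0
      by simp
    show "?m \<le> min_power A ?c ?s"
      using power_E E[of "A_in A ?c ?s"] unfolding min_power_def A_in_def by force
  qed
  then show ?thesis
    using E power_E by (auto simp: mem_rhomb_iff_min_power[OF assms(1) real_sqrt_ge_zero[OF Q]]
        mem_rhomb_iff_min_power[OF assms(1,2)] mem_rhomb_iff_min_power[OF assms(1,3)])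
qed

lemma tendsto_pencil_sq_radius: "(pencil_sq_radius c \<rho> c' \<rho>' \<longlongrightarrow> \<rho>\<^sup>2) (at_right 0)"
proof -
  have "((\<lambda>t. (1 - t) * \<rho>\<^sup>2 + t * \<rho>'\<^sup>2 - t * (1 - t) * (dist c c')\<^sup>2) \<longlongrightarrow>
      (1 - 0) * \<rho>\<^sup>2 + 0 * \<rho>'\<^sup>2 - 0 * (1 - 0) * (dist c c')\<^sup>2) (at_right 0)"
    by (intro tendsto_intros)
  then show ?thesis
    by (simp add: pencil_sq_radius_def[abs_def])
qed

lemma eventually_rhomb_pencil:
  assumes "finite A" "0 < \<rho>" "0 \<le> \<rho>'" "rhomb A c \<rho> \<inter> rhomb A c' \<rho>' \<noteq> {}"
  shows "\<forall>\<^sub>F t in at_right 0. 0 < pencil_sq_radius c \<rho> c' \<rho>' t \<and>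
    rhomb A (pencil_center c c' t) (sqrt (pencil_sq_radius c \<rho> c' \<rho>' t))
      = rhomb A c \<rho> \<inter> rhomb A c' \<rho>'"
proof -
  have "\<forall>\<^sub>F t in at_right 0. 0 < pencil_sq_radius c \<rho> c' \<rho>' t"
    using order_tendstoD(1)[OF tendsto_pencil_sq_radius[of c \<rho> c' \<rho>'], of 0] assms(2) by simp
  moreover have "\<forall>\<^sub>F t in at_right (0::real). 0 < t \<and> t < 1"
    unfolding eventually_at_right_field by (intro exI[of _ 1]) simp
  ultimately show ?thesis
    by eventually_elim (use rhomb_pencil[OF assms(1) _ assms(3,4)] assms(2) in auto)
qed

lemma rhomb_Int_mem_Rhombs:
  assumes "finite A" "R \<in> Rhombs A" "R' \<in> Rhombs A" "R \<inter> R' \<noteq> {}"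
  shows "R \<inter> R' \<in> Rhombs A"
proof -
  obtain c \<rho> c' \<rho>' where "0 < \<rho>" "R = rhomb A c \<rho>" "0 < \<rho>'" "R' = rhomb A c' \<rho>'"
    using assms(2,3) by (metis Rhombs_E)
  then obtain t where "0 < pencil_sq_radius c \<rho> c' \<rho>' t"
    "rhomb A (pencil_center c c' t) (sqrt (pencil_sq_radius c \<rho> c' \<rho>' t)) = R \<inter> R'"
    using eventually_happens'[OF trivial_limit_at_right_real eventually_rhomb_pencil[OF assms(1)]]
      assms(4) less_imp_le by metis
  then show ?thesis
    unfolding Rhombs_def by (metis (mono_tags, lifting) mem_Collect_eq real_sqrt_gt_zero)
qed

text \<open>Radii of spheres realising a subrhomboid of \<open>rhomb A c \<rho>\<close> come arbitrarily close to
  \<open>\<rho>\<close> along the pencil spanned by the two spheres.\<close>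

lemma r_rhomb_le:
  assumes "finite A" "R' \<in> Rhombs A" "R' \<subseteq> rhomb A c \<rho>" "0 < \<rho>"
  shows "r_rhomb A R' \<le> \<rho>"
proof -
  obtain c' \<rho>' where \<rho>': "0 < \<rho>'" and R': "R' = rhomb A c' \<rho>'"
    using Rhombs_E[OF assms(2)] .
  have "rhomb A c \<rho> \<inter> rhomb A c' \<rho>' = R'"
    using assms(3) R' by blast
  moreover have "R' \<noteq> {}"
    using R' A_in_mem_rhomb by blast
  ultimately have "\<forall>\<^sub>F t in at_right 0. 0 < pencil_sq_radius c \<rho> c' \<rho>' t \<and>
      rhomb A (pencil_center c c' t) (sqrt (pencil_sq_radius c \<rho> c' \<rho>' t)) = R'"
    using eventually_rhomb_pencil[OF assms(1,4) less_imp_le[OF \<rho>'], of c c'] by simp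
  then have "\<forall>\<^sub>F t in at_right 0. r_rhomb A R' \<le> sqrt (pencil_sq_radius c \<rho> c' \<rho>' t)"
  proof eventually_elim
    case (elim t)
    then show ?case
      unfolding r_rhomb_def by (intro cInf_lower) (auto intro: bdd_belowI[of _ 0])
  qed
  moreover have "((\<lambda>t. sqrt (pencil_sq_radius c \<rho> c' \<rho>' t)) \<longlongrightarrow> \<rho>) (at_right 0)"
    using tendsto_real_sqrt[OF tendsto_pencil_sq_radius[of c \<rho> c' \<rho>']] assms(4) by simp
  ultimately show ?thesis
    using tendsto_lowerbound trivial_limit_at_right_real by blast
qed

section \<open>Sliced rhomboids\<close>

lemma emb_depth: "- snd (emb w) = real (card w)"
  by (simp add: emb_def)

lemma card_mem_rhomb_bounds:
  assumes "finite A" "w \<in> rhomb A c \<rho>"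
  shows "card (A_in A c \<rho>) \<le> card w" "card w \<le> card (A_in A c \<rho>) + card (A_on A c \<rho>)"
proof -
  have fin: "finite (A_in A c \<rho>)" "finite (A_on A c \<rho>)"
    using assms(1) by (simp_all add: A_in_def A_on_def)
  have disj: "A_in A c \<rho> \<inter> A_on A c \<rho> = {}"
    by (auto simp: A_in_def A_on_def)
  show "card (A_in A c \<rho>) \<le> card w"
    using assms by (intro card_mono) (auto simp: finite_of_mem_rhomb mem_rhomb_iff)
  have "card w \<le> card (A_in A c \<rho> \<union> A_on A c \<rho>)"
    using assms fin by (intro card_mono) (auto simp: mem_rhomb_iff)
  then show "card w \<le> card (A_in A c \<rho>) + card (A_on A c \<rho>)"
    using card_Un_disjoint[OF fin disj] by simp
qed

lemma exists_card_mem_rhomb: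
  assumes "finite A" "card (A_in A c \<rho>) \<le> n" "n \<le> card (A_in A c \<rho>) + card (A_on A c \<rho>)"
  obtains w where "w \<in> rhomb A c \<rho>" "card w = n"
proof -
  obtain Q where Q: "Q \<subseteq> A_on A c \<rho>" "card Q = n - card (A_in A c \<rho>)"
    using obtain_subset_with_card_n[of "n - card (A_in A c \<rho>)" "A_on A c \<rho>"] assms(3) by force
  have "finite (A_in A c \<rho>)" "finite (A_on A c \<rho>)"
    using assms(1) by (simp_all add: A_in_def A_on_def)
  moreover have "A_in A c \<rho> \<inter> Q = {}"
    using Q(1) by (auto simp: A_in_def A_on_def)
  ultimately have "finite Q" "A_in A c \<rho> \<inter> Q = {}" "finite (A_in A c \<rho>)"
    using finite_subset[OF Q(1)] by simp_all
  then have "card (A_in A c \<rho> \<union> Q) = n"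
    using Q(2) assms(2) by (simp add: card_Un_disjoint)
  moreover have "A_in A c \<rho> \<union> Q \<in> rhomb A c \<rho>"
    using Q(1) by (auto simp: mem_rhomb_iff)
  ultimately show ?thesis using that by blast
qed

lemma depth_ghull_rhomb_bounds:
  assumes "finite A" "p \<in> ghull (rhomb A c \<rho>)"
  shows "real (card (A_in A c \<rho>)) \<le> - snd p"
    "- snd p \<le> real (card (A_in A c \<rho>) + card (A_on A c \<rho>))"
proof -
  let ?lo = "card (A_in A c \<rho>)" and ?hi = "card (A_in A c \<rho>) + card (A_on A c \<rho>)"
  let ?d = "(0::'a, -1::real)"
  have depth: "?d \<bullet> emb w = real (card w)" for w
    by (simp add: emb_def)
  have "ghull (rhomb A c \<rho>) \<subseteq> {p. real ?lo \<le> ?d \<bullet> p}"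
    unfolding ghull_def using card_mem_rhomb_bounds(1)[OF assms(1)]
    by (intro hull_minimal convex_halfspace_ge) (auto simp: depth)
  moreover have "ghull (rhomb A c \<rho>) \<subseteq> {p. ?d \<bullet> p \<le> real ?hi}"
    unfolding ghull_def using card_mem_rhomb_bounds(2)[OF assms(1)]
    by (intro hull_minimal convex_halfspace_le) (auto simp: depth simp del: of_nat_add)
  ultimately show "real ?lo \<le> - snd p" "- snd p \<le> real ?hi"
    using assms(2) by (auto simp: inner_prod_def)
qed

lemma exists_rhomb_vertex_near_depth:
  assumes "finite A" "p \<in> ghull (rhomb A c \<rho>)" "real j \<le> - snd p" "- snd p \<le> real j + 1"
  obtains v where "v \<in> rhomb A c \<rho>" "j \<le> card v" "card v \<le> j + 1"
    "- snd p = real j \<Longrightarrow> card v = j"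
proof -
  let ?lo = "card (A_in A c \<rho>)" and ?hi = "card (A_in A c \<rho>) + card (A_on A c \<rho>)"
  note lo = depth_ghull_rhomb_bounds(1)[OF assms(1,2)]
    and hi = depth_ghull_rhomb_bounds(2)[OF assms(1,2)]
  show ?thesis
  proof (cases "- snd p = real j")
    case True
    then have "?lo \<le> j" "j \<le> ?hi"
      using lo hi by (simp_all only: of_nat_le_iff)
    then show ?thesis
      using exists_card_mem_rhomb[OF assms(1)] that by (metis le_add1 order_refl)
  next
    case False
    have "real j \<le> real ?hi" "real ?lo \<le> real (j + 1)"
      using lo hi assms(3,4) by simp_all
    then have "?lo \<le> max j ?lo" "max j ?lo \<le> ?hi" "max j ?lo \<le> j + 1"
      by (simp_all only: of_nat_le_iff)
    then show ?thesis
      using exists_card_mem_rhomb[OF assms(1)] that False by (metis max.cobounded1)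
  qed
qed

lemma SRcells_E:
  assumes "finite A" "P \<in> SRcells A"
  obtains c \<rho> j v where "0 < \<rho>" "P \<subseteq> ghull (rhomb A c \<rho>)"
    "\<And>y. y \<in> P \<Longrightarrow> real j \<le> - snd y \<and> - snd y \<le> real j + 1"
    "v \<in> rhomb A c \<rho>" "emb v \<in> P"
proof -
  obtain R j where R: "R \<in> Rhombs A" and "P \<noteq> {}"
    and cases: "P = ghull R \<inter> {x. snd x = - real j}
      \<or> P = ghull R \<inter> {x. real j \<le> - snd x \<and> - snd x \<le> real j + 1}"
    using assms(2) unfolding SRcells_def by blast
  obtain c \<rho> where \<rho>: "0 < \<rho>" and Rc: "R = rhomb A c \<rho>"
    using Rhombs_E[OF R] .
  obtain p where p: "p \<in> P"
    using \<open>P \<noteq> {}\<close> by blast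
  have P_R: "P \<subseteq> ghull (rhomb A c \<rho>)"
    using cases Rc by blast
  have slab: "real j \<le> - snd y \<and> - snd y \<le> real j + 1" if "y \<in> P" for y
    using cases that by auto
  obtain v where v: "v \<in> rhomb A c \<rho>" "j \<le> card v" "card v \<le> j + 1"
    "- snd p = real j \<Longrightarrow> card v = j"
    using exists_rhomb_vertex_near_depth[OF assms(1) subsetD[OF P_R p]] slab[OF p] by metis
  have "emb v \<in> ghull R"
    unfolding ghull_def Rc using v(1) by (simp add: hull_inc)
  then have "emb v \<in> P"
    using cases p v(2-4) by (auto simp: emb_def)
  then show ?thesis
    using that \<rho> P_R slab v(1) by blast
qed

lemma cellverts_E:
  assumes "w \<in> cellverts A P"
  obtains c \<rho> where "0 < \<rho>" "w \<in> rhomb A c \<rho>" "emb w \<in> P"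
  using assms unfolding cellverts_def Rhombs_def extreme_point_of_def by blast

lemma finite_cellverts:
  assumes "finite A"
  shows "finite (cellverts A P)"
proof -
  have "cellverts A P \<subseteq> Pow A"
    by (auto elim: cellverts_E dest: subset_of_mem_rhomb)
  then show ?thesis
    using assms by (meson finite_Pow_iff finite_subset)
qed

lemma mem_cellverts:
  assumes "gen_pos A" "0 < \<rho>" "v \<in> rhomb A c \<rho>" "P \<subseteq> ghull (rhomb A c \<rho>)" "emb v \<in> P"
  shows "v \<in> cellverts A P"
  using emb_extreme_point_of[OF assms] assms(2,3) unfolding cellverts_def Rhombs_def by blast

lemma card_cellverts:
  assumes "finite A" "w \<in> cellverts A P"
    and "\<And>y. y \<in> P \<Longrightarrow> real j \<le> - snd y \<and> - snd y \<le> real j + 1"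
  shows "card w = k_cell A P \<or> card w = k_cell A P + 1"
proof -
  have depth: "j \<le> card w' \<and> card w' \<le> j + 1" if w': "w' \<in> cellverts A P" for w'
  proof -
    obtain c \<rho> where "emb w' \<in> P"
      using cellverts_E[OF w'] by metis
    then have "real j \<le> real (card w')" "real (card w') \<le> real j + 1"
      using assms(3) emb_depth by metis+
    then show ?thesis
      by (metis of_nat_1 of_nat_add of_nat_le_iff)
  qed
  have fin: "finite (card ` cellverts A P)"
    using finite_cellverts[OF assms(1)] by simp
  obtain w0 where "w0 \<in> cellverts A P" "k_cell A P = card w0"
    using Min_in[OF fin] assms(2) unfolding k_cell_def by blast
  moreover have "k_cell A P \<le> card w"
    unfolding k_cell_def using fin assms(2) by simp
  ultimately show ?thesis
    using depth[of w0] depth[OF assms(2)] by linarith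
qed

lemma finite_Rhombs: "finite A \<Longrightarrow> finite (Rhombs A)"
  by (rule finite_subset[of _ "Pow (Pow A)"]) (auto elim!: Rhombs_E dest: subset_of_mem_rhomb)

lemma min_rhomb:
  assumes "finite A" "R \<in> Rhombs A" "P \<subseteq> ghull R"
  shows "min_rhomb A P \<in> Rhombs A" "P \<subseteq> ghull (min_rhomb A P)"
    "\<And>R'. R' \<in> Rhombs A \<Longrightarrow> P \<subseteq> ghull R' \<Longrightarrow>
      aff_dim (ghull (min_rhomb A P)) \<le> aff_dim (ghull R')"
proof -
  let ?C = "{R \<in> Rhombs A. P \<subseteq> ghull R}"
  have "min_rhomb A P = arg_min_on (\<lambda>R. aff_dim (ghull R)) ?C"
    by (simp add: min_rhomb_def arg_min_on_def)
  moreover have "finite ?C" "?C \<noteq> {}"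
    using finite_Rhombs[OF assms(1)] assms(2,3) by auto
  ultimately show "min_rhomb A P \<in> Rhombs A" "P \<subseteq> ghull (min_rhomb A P)"
    "\<And>R'. R' \<in> Rhombs A \<Longrightarrow> P \<subseteq> ghull R' \<Longrightarrow>
      aff_dim (ghull (min_rhomb A P)) \<le> aff_dim (ghull R')"
    using arg_min_if_finite[of ?C "\<lambda>R. aff_dim (ghull R)"] by (auto simp: not_less)
qed

lemma cellverts_subset_min_rhomb:
  assumes "finite A" "R \<in> Rhombs A" "P \<subseteq> ghull R"
  shows "cellverts A P \<subseteq> min_rhomb A P"
proof
  fix w assume "w \<in> cellverts A P"
  then obtain c \<rho> where "0 < \<rho>" "w \<in> rhomb A c \<rho>" "emb w \<in> P"
    by (rule cellverts_E)
  moreover obtain c' \<rho>' where "0 < \<rho>'" "min_rhomb A P = rhomb A c' \<rho>'"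
    using Rhombs_E[OF min_rhomb(1)[OF assms]] .
  ultimately show "w \<in> min_rhomb A P"
    using min_rhomb(2)[OF assms] mem_rhomb_if_emb_mem_ghull[OF assms(1)] by (metis less_imp_le subsetD)
qed

text \<open>If the cell contains a vertex of \<open>R\<close>, the minimal rhomboid containing it cannot leave \<open>R\<close>:
  otherwise its intersection with \<open>R\<close>, a rhomboid whose realisation still contains the cell,
  would have smaller dimension.\<close>

lemma min_rhomb_subset:
  assumes "finite A" "0 < \<rho>" "P \<subseteq> ghull (rhomb A c \<rho>)" "v \<in> rhomb A c \<rho>" "emb v \<in> P"
  shows "min_rhomb A P \<subseteq> rhomb A c \<rho>"
proof (rule ccontr)
  assume not_sub: "\<not> min_rhomb A P \<subseteq> rhomb A c \<rho>"
  have R: "rhomb A c \<rho> \<in> Rhombs A"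
    using assms(2) unfolding Rhombs_def by blast
  obtain c' \<rho>' where \<rho>': "0 < \<rho>'" and R': "min_rhomb A P = rhomb A c' \<rho>'"
    using Rhombs_E[OF min_rhomb(1)[OF assms(1) R assms(3)]] .
  have P_R': "P \<subseteq> ghull (rhomb A c' \<rho>')"
    using min_rhomb(2)[OF assms(1) R assms(3)] R' by simp
  then have "v \<in> rhomb A c' \<rho>'"
    using mem_rhomb_if_emb_mem_ghull[OF assms(1) _ _ assms(4)] assms(2,5) \<rho>' by force
  then have "rhomb A c \<rho> \<inter> rhomb A c' \<rho>' \<in> Rhombs A"
    using rhomb_Int_mem_Rhombs[OF assms(1) R] R' min_rhomb(1)[OF assms(1) R assms(3)] assms(4)
    by (metis IntI empty_iff)
  moreover have "P \<subseteq> ghull (rhomb A c \<rho> \<inter> rhomb A c' \<rho>')"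
    using assms(3) P_R' ghull_Int_rhomb[OF assms(1)] assms(2) \<rho>' by (metis le_infI less_imp_le)
  ultimately have "aff_dim (ghull (rhomb A c' \<rho>')) \<le> aff_dim (ghull (rhomb A c \<rho> \<inter> rhomb A c' \<rho>'))"
    using min_rhomb(3)[OF assms(1) R assms(3)] R' by metis
  then show False
    using aff_dim_ghull_Int_rhomb_less[OF assms(1)] not_sub R' assms(2) \<rho>' by (metis less_imp_le not_le)
qed

lemma slab_cell:
  assumes gp: "gen_pos A" and \<rho>: "0 < \<rho>" and \<sigma>_R: "\<sigma> \<subseteq> rhomb A b \<rho>" and "\<sigma> \<noteq> {}"
    and cards: "\<And>B. B \<in> \<sigma> \<Longrightarrow> card B \<in> {i, i + 1}"
  defines "P \<equiv> ghull (rhomb A b \<rho>) \<inter> {x. real i \<le> - snd x \<and> - snd x \<le> real i + 1}"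
  shows "P \<in> SRcells A" "\<sigma> \<subseteq> cellverts A P" "i \<le> k_cell A P"
    "min_rhomb A P \<in> Rhombs A" "min_rhomb A P \<subseteq> rhomb A b \<rho>"
proof -
  have A: "finite A"
    using gp by (simp add: gen_pos_def)
  have R: "rhomb A b \<rho> \<in> Rhombs A"
    using \<rho> unfolding Rhombs_def by blast
  have P_R: "P \<subseteq> ghull (rhomb A b \<rho>)"
    by (simp add: P_def)
  have emb_P: "emb B \<in> P" if B: "B \<in> \<sigma>" for B
  proof -
    have "emb B \<in> ghull (rhomb A b \<rho>)"
      unfolding ghull_def using \<sigma>_R B by (intro hull_inc imageI) blast
    then show ?thesis
      using cards[OF B] unfolding P_def by (auto simp: emb_depth)
  qed
  show \<sigma>_cv: "\<sigma> \<subseteq> cellverts A P"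
    using mem_cellverts[OF gp \<rho> _ P_R emb_P] \<sigma>_R by blast
  obtain B0 where B0: "B0 \<in> \<sigma>"
    using \<open>\<sigma> \<noteq> {}\<close> by blast
  show "P \<in> SRcells A"
    unfolding SRcells_def
  proof (intro CollectI conjI bexI[OF _ R] exI[of _ i] disjI2)
    show "P \<noteq> {}"
      using emb_P[OF B0] by blast
  qed (simp add: P_def)
  have "i \<le> card w" if w: "w \<in> cellverts A P" for w
  proof -
    obtain c' \<rho>' where "emb w \<in> P"
      using cellverts_E[OF w] by metis
    then show ?thesis
      unfolding P_def by (simp add: emb_depth)
  qed
  moreover have "k_cell A P \<in> card ` cellverts A P"
    unfolding k_cell_def using finite_cellverts[OF A] \<sigma>_cv B0 by (intro Min_in) auto
  ultimately show "i \<le> k_cell A P"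
    by force
  show "min_rhomb A P \<in> Rhombs A"
    using min_rhomb(1)[OF A R P_R] .
  show "min_rhomb A P \<subseteq> rhomb A b \<rho>"
    using min_rhomb_subset[OF A \<rho> P_R _ emb_P[OF B0]] \<sigma>_R B0 by blast
qed

section \<open>Balls intersected with Voronoi regions\<close>

lemma center_mem_BV:
  assumes "B \<in> rhomb A c \<rho>"
  shows "c \<in> BV A \<rho> B"
proof -
  have "dist c a \<le> \<rho>" if "a \<in> B" for a
    using assms that by (auto simp: mem_rhomb_iff A_in_def A_on_def dist_commute)
  moreover have "\<rho> \<le> dist c a'" if "a' \<in> A - B" for a'
    using assms that by (force simp: mem_rhomb_iff A_in_def dist_commute)
  ultimately show ?thesis
    unfolding BV_def BallR_def Vor_def by (blast intro: order_trans)
qed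

lemma closed_BV: "closed (BV A r B)"
proof -
  have "BV A r B = (\<Inter>a\<in>B. cball a r) \<inter> (\<Inter>a\<in>B. \<Inter>a'\<in>A - B. {b. dist b a \<le> dist b a'})"
    by (auto simp: BV_def BallR_def Vor_def dist_commute)
  then show ?thesis
    by (simp add: closed_INT closed_Int closed_Collect_le continuous_on_dist continuous_on_id
        continuous_on_const)
qed

lemma BV_mono: "r \<le> s \<Longrightarrow> BV A r B \<subseteq> BV A s B"
  by (auto simp: BV_def BallR_def)

lemma BV_subset_cball: "a \<in> B \<Longrightarrow> BV A r B \<subseteq> cball a r"
  by (auto simp: BV_def BallR_def dist_commute)

lemma BV_Inter_shrinking:
  assumes "\<And>n. x \<in> BV A (r + inverse (Suc n)) B"
  shows "x \<in> BV A r B"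
proof -
  have "dist x a \<le> r" if "a \<in> B" for a
  proof (rule field_le_epsilon)
    fix e :: real assume "0 < e"
    then obtain n where "inverse (Suc n) < e"
      using reals_Archimedean by blast
    moreover have "dist x a \<le> r + inverse (Suc n)"
      using assms[of n] that by (simp add: BV_def BallR_def)
    ultimately show "dist x a \<le> r + e" by linarith
  qed
  then show ?thesis
    using assms[of 0] by (simp add: BV_def BallR_def)
qed

lemma exists_rhomb_radius_less:
  assumes "R \<in> Rhombs A" "r_rhomb A R < s"
  obtains c \<rho> where "0 < \<rho>" "\<rho> < s" "rhomb A c \<rho> = R"
proof -
  have "{\<rho>. 0 < \<rho> \<and> (\<exists>c. rhomb A c \<rho> = R)} \<noteq> {}"
    using assms(1) unfolding Rhombs_def by blast
  from cInf_lessD[OF this] assms(2) show ?thesis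
    using that unfolding r_rhomb_def by blast
qed

text \<open>The centres of spheres realising \<open>R\<close> with radius below \<open>r + 1/(n+1)\<close> lie in a decreasing
  sequence of nonempty compact sets; a common point of all of them is the required witness.\<close>

lemma exists_common_BV:
  assumes "R \<in> Rhombs A" "r_rhomb A R \<le> r" "B0 \<in> R" "a0 \<in> B0"
  obtains x where "\<And>B. B \<in> R \<Longrightarrow> x \<in> BV A r B"
proof -
  define S where "S n = (\<Inter>B\<in>R. BV A (r + inverse (Suc n)) B)" for n
  obtain x where x: "\<And>n. x \<in> S n"
  proof (rule bounded_closed_nest)
    show "closed (S n)" for n
      unfolding S_def by (intro closed_INT ballI closed_BV)
    show "S n \<noteq> {}" for n
    proof -
      have "r_rhomb A R < r + inverse (Suc n)"
        using assms(2) by (meson inverse_positive_iff_positive less_add_same_cancel1 of_nat_0_less_iff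
            order_le_less_trans zero_less_Suc)
      then obtain c \<rho> where "\<rho> < r + inverse (Suc n)" "rhomb A c \<rho> = R"
        using exists_rhomb_radius_less[OF assms(1)] by metis
      then have "c \<in> S n"
        unfolding S_def using center_mem_BV BV_mono by (blast dest: less_imp_le)
      then show ?thesis by blast
    qed
    show "S n \<subseteq> S m" if "m \<le> n" for m n
      unfolding S_def using that
      by (intro INF_mono' BV_mono) (simp add: le_imp_inverse_le)
    show "bounded (S 0)"
      using assms(3,4) BV_subset_cball unfolding S_def by (meson INT_lower bounded_cball bounded_subset)
  qed blast
  then show ?thesis
    using that BV_Inter_shrinking[of x] unfolding S_def by blast
qed

lemma exists_farthest:
  fixes b :: "'a::metric_space"
  assumes "finite U" "U \<noteq> {}"
  obtains e where "e \<in> U" "\<And>a. a \<in> U \<Longrightarrow> dist a b \<le> dist e b"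
proof -
  have "Max ((\<lambda>a. dist a b) ` U) \<in> (\<lambda>a. dist a b) ` U"
    using assms by (intro Max_in) simp_all
  then obtain e where "e \<in> U" "dist e b = Max ((\<lambda>a. dist a b) ` U)"
    by (metis imageE)
  then show ?thesis
    using that assms(1) by simp
qed

text \<open>The sites of a Delaunay vertex \<open>B\<close> are the sites nearest to \<open>b\<close>. If some site at distance
  less than the farthest site \<open>e\<close> were missing from \<open>B\<close>, the vertex \<open>B'\<close> containing \<open>e\<close>
  would contain \<open>B\<close>, that site and \<open>e\<close>, contradicting \<open>card B' \<le> card B + 1\<close>.\<close>

lemma Del_plus_vertices_subset_rhomb:
  assumes "finite A" and \<sigma>: "\<And>B. B \<in> \<sigma> \<Longrightarrow> B \<subseteq> A \<and> card B \<in> {i, i + 1} \<and> b \<in> Vor A B"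
    and e: "B' \<in> \<sigma>" "e \<in> B'" and far: "\<And>a. a \<in> \<Union>\<sigma> \<Longrightarrow> dist a b \<le> dist e b"
  shows "\<sigma> \<subseteq> rhomb A b (dist e b)"
proof
  fix B assume B: "B \<in> \<sigma>"
  have fin: "finite B" "finite B'"
    using \<sigma> B e(1) assms(1) finite_subset by meson+
  have nearer: "dist b x \<le> dist b a" if "C \<in> \<sigma>" "x \<in> C" "a \<in> A - C" for C x a
    using \<sigma>[OF that(1)] that(2,3) by (simp add: Vor_def)
  have "a \<in> B" if a: "a \<in> A" "dist a b < dist e b" for a
  proof (rule ccontr)
    assume "a \<notin> B"
    have "a \<in> B'"
      using nearer[OF e] a by (force simp: dist_commute)
    moreover have "B \<subseteq> B'"
      using nearer[OF B _ _] nearer[OF e] \<open>a \<notin> B\<close> a \<sigma>[OF B]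
      by (force simp: dist_commute)
    moreover have "e \<notin> B" "a \<noteq> e"
      using nearer[OF B _ _] \<open>a \<notin> B\<close> a by (force simp: dist_commute)+
    ultimately have "card (insert a (insert e B)) \<le> card B'"
      using e(2) fin by (intro card_mono) auto
    then show False
      using \<open>a \<notin> B\<close> \<open>e \<notin> B\<close> \<open>a \<noteq> e\<close> fin \<sigma>[OF B] \<sigma>[OF e(1)] by auto
  qed
  moreover have "dist a b \<le> dist e b" if "a \<in> B" for a
    using far B that by blast
  ultimately show "B \<in> rhomb A b (dist e b)"
    using \<sigma>[OF B] by (force simp: mem_rhomb_iff A_in_def A_on_def)
qed

lemma rhomb_small_radius:
  assumes "finite A" "b \<in> A"
  obtains \<rho>0 where "0 < \<rho>0" "\<And>\<epsilon>. 0 < \<epsilon> \<Longrightarrow> \<epsilon> \<le> \<rho>0 \<Longrightarrow> rhomb A b \<epsilon> = {{b}}"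
proof -
  obtain \<delta> where \<delta>: "0 < \<delta>" "\<And>x. x \<in> A \<Longrightarrow> x \<noteq> b \<Longrightarrow> \<delta> \<le> dist b x"
    using finite_set_avoid[OF assms(1), of b] by blast
  have "rhomb A b \<epsilon> = {{b}}" if "0 < \<epsilon>" "\<epsilon> \<le> \<delta> / 2" for \<epsilon>
  proof -
    have "\<epsilon> < dist x b" if "x \<in> A" "x \<noteq> b" for x
      using \<delta>(1) \<delta>(2)[OF that] \<open>\<epsilon> \<le> \<delta> / 2\<close> dist_commute[of b x] by linarith
    then have "dist x b < \<epsilon> \<longleftrightarrow> x = b" "dist x b \<noteq> \<epsilon>" if "x \<in> A" for x
      using that \<open>0 < \<epsilon>\<close> by force+
    then have "A_in A b \<epsilon> = {b}" "A_on A b \<epsilon> = {}"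
      using assms(2) by (auto simp: A_in_def A_on_def)
    then show ?thesis
      by (auto simp: mem_rhomb_iff)
  qed
  then show ?thesis
    using that \<delta>(1) half_gt_zero by blast
qed

lemma rhomb_singleton_radius:
  assumes "finite A" "b \<in> A"
  obtains \<rho> where "0 < \<rho>" "rhomb A b \<rho> = {{b}}"
    "\<And>R. R \<in> Rhombs A \<Longrightarrow> R \<subseteq> rhomb A b \<rho> \<Longrightarrow> r_rhomb A R \<le> 0"
proof -
  obtain \<rho>0 where \<rho>0: "0 < \<rho>0" "\<And>\<epsilon>. 0 < \<epsilon> \<Longrightarrow> \<epsilon> \<le> \<rho>0 \<Longrightarrow> rhomb A b \<epsilon> = {{b}}"
    using rhomb_small_radius[OF assms] by metis
  then have "{{b}} \<in> Rhombs A"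
    unfolding Rhombs_def by (metis (mono_tags, lifting) mem_Collect_eq order_refl)
  have "r_rhomb A {{b}} \<le> 0 + e" if "0 < e" for e
    using r_rhomb_le[OF assms(1) \<open>{{b}} \<in> Rhombs A\<close>, of b "min e \<rho>0"] \<rho>0 that by simp
  then have "r_rhomb A {{b}} \<le> 0"
    by (rule field_le_epsilon)
  moreover have "R = {{b}}" if "R \<in> Rhombs A" "R \<subseteq> {{b}}" for R
    using that by (metis A_in_mem_rhomb Rhombs_E empty_iff subset_singletonD)
  ultimately show ?thesis
    using that \<rho>0 by (metis order_refl)
qed

lemma Del_plus_subset_rhomb:
  assumes "finite A" "0 \<le> r" "1 \<le> i" "\<sigma> \<in> Del_plus A r i"
  obtains b \<rho> where "0 < \<rho>" "\<sigma> \<subseteq> rhomb A b \<rho>"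
    "\<And>R. R \<in> Rhombs A \<Longrightarrow> R \<subseteq> rhomb A b \<rho> \<Longrightarrow> r_rhomb A R \<le> r"
proof -
  obtain b where b: "\<And>B. B \<in> \<sigma> \<Longrightarrow> b \<in> BV A r B"
    using assms(4) unfolding Del_plus_def by blast
  have \<sigma>: "B \<subseteq> A \<and> card B \<in> {i, i + 1} \<and> b \<in> Vor A B" if "B \<in> \<sigma>" for B
    using assms(4) b[OF that] that unfolding Del_plus_def Del_plus_vertices_def BV_def by blast
  have nonempty: "B \<noteq> {}" if "B \<in> \<sigma>" for B
    using \<sigma>[OF that] assms(3) by auto
  let ?U = "\<Union>\<sigma>"
  have "?U \<subseteq> A"
    using \<sigma> by blast
  moreover obtain B0 where "B0 \<in> \<sigma>"
    using assms(4) unfolding Del_plus_def by blast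
  ultimately have U: "finite ?U" "?U \<noteq> {}"
    using nonempty assms(1) finite_subset by blast+
  obtain e where e: "e \<in> ?U" "\<And>a. a \<in> ?U \<Longrightarrow> dist a b \<le> dist e b"
    using exists_farthest[OF U] by metis
  then obtain B' where B': "B' \<in> \<sigma>" "e \<in> B'" by blast
  have "dist e b \<le> r"
    using b[OF B'(1)] B'(2) dist_commute[of e b] by (simp add: BV_def BallR_def)
  show ?thesis
  proof (cases "0 < dist e b")
    case True
    then show ?thesis
      using that Del_plus_vertices_subset_rhomb[OF assms(1) \<sigma> B' e(2)] r_rhomb_le[OF assms(1)]
        \<open>dist e b \<le> r\<close> by (meson order_trans)
  next
    case False
    then have "a = b" if "a \<in> ?U" for a
      using e(2)[OF that] by simp
    then have singleton: "B = {b}" if "B \<in> \<sigma>" for B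
      using nonempty[OF that] that by blast
    then have "b \<in> A"
      using \<sigma>[OF B'(1)] singleton[OF B'(1)] by blast
    then obtain \<rho>0 where "0 < \<rho>0" "rhomb A b \<rho>0 = {{b}}"
      "\<And>R. R \<in> Rhombs A \<Longrightarrow> R \<subseteq> rhomb A b \<rho>0 \<Longrightarrow> r_rhomb A R \<le> 0"
      using rhomb_singleton_radius[OF assms(1)] by blast
    then show ?thesis
      using that singleton assms(2) by (metis order_trans singletonI subsetI)
  qed
qed

section \<open>Sliced rhomboids and the sliced Delaunay complex\<close>

lemma cellverts_mem_Del_plus:
  assumes gp: "gen_pos A" and "1 \<le> k" and "P \<in> SRhomb A r k"
  shows "cellverts A P \<in> Del_plus A r (k_cell A P)"
proof -
  have A: "finite A"
    using gp by (simp add: gen_pos_def)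
  have P: "P \<in> SRcells A" "r_rhomb A (min_rhomb A P) \<le> r" "k \<le> k_cell A P"
    using assms(3) by (simp_all add: SRhomb_def r_cell_def)
  obtain c \<rho> j v where \<rho>: "0 < \<rho>" and P_R: "P \<subseteq> ghull (rhomb A c \<rho>)"
    and slab: "\<And>y. y \<in> P \<Longrightarrow> real j \<le> - snd y \<and> - snd y \<le> real j + 1"
    and v: "v \<in> rhomb A c \<rho>" "emb v \<in> P"
    using SRcells_E[OF A P(1)] by metis
  have R: "rhomb A c \<rho> \<in> Rhombs A"
    using \<rho> unfolding Rhombs_def by blast
  have v_cv: "v \<in> cellverts A P"
    using mem_cellverts[OF gp \<rho> v(1) P_R v(2)] .
  have cards: "card w \<in> {k_cell A P, k_cell A P + 1}" if "w \<in> cellverts A P" for w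
    using card_cellverts[OF A that slab] by simp
  then have "v \<noteq> {}"
    using v_cv P(3) assms(2) by fastforce
  then obtain a0 where "a0 \<in> v" by blast
  then obtain x where x: "\<And>B. B \<in> min_rhomb A P \<Longrightarrow> x \<in> BV A r B"
    using exists_common_BV[OF min_rhomb(1)[OF A R P_R] P(2)] v_cv
      cellverts_subset_min_rhomb[OF A R P_R] by blast
  have "cellverts A P \<subseteq> Del_plus_vertices A r (k_cell A P)"
    using cards x cellverts_subset_min_rhomb[OF A R P_R]
    unfolding Del_plus_vertices_def by (blast elim: cellverts_E dest: subset_of_mem_rhomb)
  moreover have "x \<in> (\<Inter>B\<in>cellverts A P. BV A r B)"
    using x cellverts_subset_min_rhomb[OF A R P_R] by blast
  ultimately show ?thesis
    unfolding Del_plus_def using v_cv by blast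
qed

lemma Del_plus_subset_cellverts:
  assumes gp: "gen_pos A" and "0 \<le> r" "1 \<le> k" "k \<le> i" "\<sigma> \<in> Del_plus A r i"
  obtains P where "P \<in> SRhomb A r k" "\<sigma> \<subseteq> cellverts A P"
proof -
  have "finite A"
    using gp by (simp add: gen_pos_def)
  moreover have "1 \<le> i"
    using assms(3,4) by linarith
  ultimately obtain b \<rho> where \<rho>: "0 < \<rho>" and \<sigma>_R: "\<sigma> \<subseteq> rhomb A b \<rho>"
    and radius: "\<And>R. R \<in> Rhombs A \<Longrightarrow> R \<subseteq> rhomb A b \<rho> \<Longrightarrow> r_rhomb A R \<le> r"
    using Del_plus_subset_rhomb[OF _ assms(2) _ assms(5)] by metis
  have "\<sigma> \<noteq> {}" "\<And>B. B \<in> \<sigma> \<Longrightarrow> card B \<in> {i, i + 1}"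
    using assms(5) unfolding Del_plus_def Del_plus_vertices_def by blast+
  note cell = slab_cell[OF gp \<rho> \<sigma>_R this]
  let ?P = "ghull (rhomb A b \<rho>) \<inter> {x. real i \<le> - snd x \<and> - snd x \<le> real i + 1}"
  have "k \<le> k_cell A ?P"
    using cell(3) assms(4) by linarith
  then have "?P \<in> SRhomb A r k"
    using cell(1) radius[OF cell(4,5)] unfolding SRhomb_def r_cell_def by blast
  then show ?thesis
    using that cell(2) by blast
qed

lemma singleton_mem_SDel:
  assumes "v \<in> SDel_vertices A r k"
  shows "{v} \<in> SDel A r k"
proof -
  obtain i where "k \<le> i" "v \<in> Del_plus_vertices A r i"
    using assms unfolding SDel_vertices_def by blast
  then have "{v} \<in> Del_plus A r i"
    unfolding Del_plus_def Del_plus_vertices_def by simp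
  then show ?thesis
    unfolding SDel_def using \<open>k \<le> i\<close> by blast
qed

theorem lemma7:
  fixes A :: "'a::euclidean_space set" and r :: real and k :: nat
  assumes "gen_pos A" and "0 \<le> r" and "1 \<le> k"
  shows "SRhomb_vertices A r k = SDel_vertices A r k
    \<and> (\<forall>P\<in>SRhomb A r k. cellverts A P \<in> SDel A r k)
    \<and> (\<forall>\<sigma>\<in>SDel A r k. \<exists>P\<in>SRhomb A r k. \<sigma> \<subseteq> cellverts A P)"
proof (intro conjI ballI)
  have cells: "cellverts A P \<in> Del_plus A r (k_cell A P)" "k \<le> k_cell A P"
    if "P \<in> SRhomb A r k" for P
    using cellverts_mem_Del_plus[OF assms(1,3) that] that by (simp_all add: SRhomb_def)
  have simplices: "\<exists>P\<in>SRhomb A r k. \<sigma> \<subseteq> cellverts A P" if "\<sigma> \<in> SDel A r k" for \<sigma>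
    using that Del_plus_subset_cellverts[OF assms] unfolding SDel_def by (metis UN_E atLeast_iff)
  show "cellverts A P \<in> SDel A r k" if "P \<in> SRhomb A r k" for P
    using cells[OF that] unfolding SDel_def by blast
  show "\<exists>P\<in>SRhomb A r k. \<sigma> \<subseteq> cellverts A P" if "\<sigma> \<in> SDel A r k" for \<sigma>
    using simplices[OF that] .
  show "SRhomb_vertices A r k = SDel_vertices A r k"
  proof
    show "SRhomb_vertices A r k \<subseteq> SDel_vertices A r k"
      using cells unfolding SRhomb_vertices_def SDel_vertices_def Del_plus_def by fastforce
    show "SDel_vertices A r k \<subseteq> SRhomb_vertices A r k"
    proof
      fix v assume "v \<in> SDel_vertices A r k"
      then obtain P where "P \<in> SRhomb A r k" "{v} \<subseteq> cellverts A P"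
        using simplices singleton_mem_SDel by blast
      then show "v \<in> SRhomb_vertices A r k"
        unfolding SRhomb_vertices_def by blast
    qed
  qed
qed

end
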